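(* (i) The solutions $(p,m)\in\mathbb{Z}_{\ge0}\times\mathbb{Z}_{>0}$ of $p^2-mp+\frac{m(m-1)}{6}=0$ with $p\le[\frac m2]$ are precisely the pairs $(p_i,m_i)$, $i\ge1$, defined by $(p_1,m_1)=(0,1)$, $p_{i+1}=m_i-p_i$, $m_{i+1}=5m_i-6p_i+1$. (ii) The solutions $(q,n)\in\mathbb{Z}_{\ge0}\times\mathbb{Z}_{>0}$ of $q^2-2nq+\frac{n(2n-1)}{3}=0$ with $q\le n$ are precisely the pairs $(q_i,n_i)$, $i\ge1$, defined by $(q_1,n_1)=(1,3)$, $q_{i+1}=8n_i-5q_i+1$, $n_{i+1}=19n_i-12q_i+3$. *)

theory Defs
  imports Complex_Main
begin

text \<open>Sequence (p_i, m_i), indexed from i = 1 as in the paper (value at 0 is irrelevant).\<close>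
fun pm_seq :: "nat \<Rightarrow> int \<times> int" where
  "pm_seq 0 = (0, 1)"
| "pm_seq (Suc 0) = (0, 1)"
| "pm_seq (Suc (Suc i)) =
     (let (p, m) = pm_seq (Suc i) in (m - p, 5 * m - 6 * p + 1))"

text \<open>Sequence (q_i, n_i), indexed from i = 1 (value at 0 is irrelevant).\<close>
fun qn_seq :: "nat \<Rightarrow> int \<times> int" where
  "qn_seq 0 = (1, 3)"
| "qn_seq (Suc 0) = (1, 3)"
| "qn_seq (Suc (Suc i)) =
     (let (q, n) = qn_seq (Suc i) in (8 * n - 5 * q + 1, 19 * n - 12 * q + 3))"

end

theory Submission
  imports Defs
begin

text \<open>Both equations, cleared of denominators, are integral quadratic equations invariant
  under the affine step maps of the recursions. On every solution other than the base one, the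
  inverse step strictly decreases the second coordinate and preserves the side conditions, so every
  solution descends to the base solution and hence lies on its forward orbit.\<close>

lemma Collect_eq_orbit_by_descent:
  fixes f :: "'a \<Rightarrow> 'a" and \<mu> :: "'a \<Rightarrow> nat"
  assumes base: "S a"
    and step: "\<And>x. S x \<Longrightarrow> S (f x)"
    and descent: "\<And>x. S x \<Longrightarrow> x \<noteq> a \<Longrightarrow> \<exists>y. S y \<and> f y = x \<and> \<mu> y < \<mu> x"
  shows "{x. S x} = range (\<lambda>i. (f ^^ i) a)"
proof (intro equalityI subsetI)
  fix x assume "x \<in> {x. S x}"
  then have "S x" by simp
  then show "x \<in> range (\<lambda>i. (f ^^ i) a)"
  proof (induction x rule: measure_induct_rule[of \<mu>])
    case (less x)
    show ?case
    proof (cases "x = a")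
      case True
      then show ?thesis by (metis funpow_0 rangeI)
    next
      case False
      then obtain y where "S y" "f y = x" "\<mu> y < \<mu> x"
        using descent less.prems by blast
      then obtain i where "y = (f ^^ i) a" using less.IH by blast
      then have "x = (f ^^ Suc i) a" using \<open>f y = x\<close> by simp
      then show ?thesis by blast
    qed
  qed
next
  fix x assume "x \<in> range (\<lambda>i. (f ^^ i) a)"
  then obtain i where "x = (f ^^ i) a" by blast
  moreover have "S ((f ^^ i) a)" by (induction i) (simp_all add: base step)
  ultimately show "x \<in> {x. S x}" by simp
qed

definition pm_step :: "int \<times> int \<Rightarrow> int \<times> int" where
  "pm_step = (\<lambda>(p, m). (m - p, 5 * m - 6 * p + 1))"

definition pm_solution :: "int \<Rightarrow> int \<Rightarrow> bool" where
  "pm_solution p m \<longleftrightarrow> 0 \<le> p \<and> 0 < m \<and> 6 * p^2 - 6 * m * p + m^2 - m = 0 \<and> 2 * p \<le> m"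

lemma pm_seq_Suc_eq_funpow: "pm_seq (Suc i) = (pm_step ^^ i) (0, 1)"
  by (induction i) (simp_all add: pm_step_def case_prod_beta Let_def)

lemma pm_equation_rat_iff:
  "(of_int p :: rat)^2 - of_int m * of_int p + of_int m * (of_int m - 1) / 6 = 0
   \<longleftrightarrow> 6 * p^2 - 6 * m * p + m^2 - m = 0"
proof -
  have "(of_int p :: rat)^2 - of_int m * of_int p + of_int m * (of_int m - 1) / 6
      = of_int (6 * p^2 - 6 * m * p + m^2 - m) / 6"
    by (simp add: field_simps power2_eq_square)
  then show ?thesis by (simp only: divide_eq_0_iff of_int_eq_0_iff) simp
qed

lemma pm_solution_step:
  assumes "pm_solution p m"
  shows "pm_solution (m - p) (5 * m - 6 * p + 1)"
proof -
  have "6 * (m - p)^2 - 6 * (5 * m - 6 * p + 1) * (m - p) + (5 * m - 6 * p + 1)^2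
          - (5 * m - 6 * p + 1)
      = 6 * p^2 - 6 * m * p + m^2 - m"
    by (simp add: algebra_simps power2_eq_square)
  then show ?thesis using assms by (simp add: pm_solution_def)
qed

lemma pm_solution_descent:
  assumes sol: "pm_solution p m" and "m \<noteq> 1"
  shows "pm_solution (5 * p + 1 - m) (6 * p + 1 - m) \<and> 6 * p + 1 - m < m"
proof -
  define p' where "p' = 5 * p + 1 - m"
  define m' where "m' = 6 * p + 1 - m"
  have eq: "6 * p^2 - 6 * m * p + m^2 - m = 0" and "0 \<le> p" "0 < m" "2 * p \<le> m"
    using sol by (auto simp: pm_solution_def)
  have "m > 1" using \<open>0 < m\<close> \<open>m \<noteq> 1\<close> by simp
  have "p > 0"
  proof (rule ccontr)
    assume "\<not> p > 0"
    then have "m * (m - 1) = 0" using eq \<open>0 \<le> p\<close> by (simp add: algebra_simps power2_eq_square)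
    then show False using \<open>m > 1\<close> by simp
  qed
  have "m' * m = 6 * p^2"
    using eq unfolding m'_def by (simp add: algebra_simps power2_eq_square)
  then have "0 < m' * m" using \<open>p > 0\<close> by simp
  then have "m' > 0" using \<open>0 < m\<close> by (simp add: zero_less_mult_iff)
  have "4 * p + 1 \<le> m"
  proof (rule ccontr)
    assume "\<not> 4 * p + 1 \<le> m"
    then have "(4 * p - m) * (4 * p - 3 * m) \<le> 0"
      using \<open>2 * p \<le> m\<close> \<open>0 < m\<close> by (intro mult_nonneg_nonpos) auto
    moreover have "6 * ((4 * p - m) * (4 * p - 3 * m)) - 2 * m^2 - 16 * m
        = 16 * (6 * p^2 - 6 * m * p + m^2 - m)"
      by (simp add: algebra_simps power2_eq_square)
    ultimately show False using eq \<open>0 < m\<close> by (smt (verit) zero_le_power2)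
  qed
  have eq': "6 * p'^2 - 6 * m' * p' + m'^2 - m' = 0"
    using eq unfolding p'_def m'_def by (simp add: algebra_simps power2_eq_square)
  have "6 * p' * p = m' * (m' - 1)"
    using eq unfolding p'_def m'_def by (simp add: algebra_simps power2_eq_square)
  then have "0 \<le> 6 * p' * p" using \<open>m' > 0\<close> by simp
  then have "p' \<ge> 0" using \<open>p > 0\<close> by (simp add: zero_le_mult_iff)
  show ?thesis
    using eq' \<open>p' \<ge> 0\<close> \<open>m' > 0\<close> \<open>4 * p + 1 \<le> m\<close>
    unfolding pm_solution_def p'_def m'_def by simp
qed

lemma pm_solutions_eq_orbit:
  "{(p, m). pm_solution p m} = range (\<lambda>i. (pm_step ^^ i) (0, 1))"
proof (rule Collect_eq_orbit_by_descent[where \<mu> = "\<lambda>(p, m). nat m"])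
  show "case (0, 1) of (p, m) \<Rightarrow> pm_solution p m" by (simp add: pm_solution_def)
next
  fix x :: "int \<times> int"
  assume "case x of (p, m) \<Rightarrow> pm_solution p m"
  then show "case pm_step x of (p, m) \<Rightarrow> pm_solution p m"
    by (cases x) (simp add: pm_step_def pm_solution_step)
next
  fix x :: "int \<times> int"
  assume sol: "case x of (p, m) \<Rightarrow> pm_solution p m" and "x \<noteq> (0, 1)"
  obtain p m where x: "x = (p, m)" by fastforce
  have "m \<noteq> 1"
  proof
    assume "m = 1"
    then have "6 * p * (p - 1) = 0" and "0 \<le> 2 * p" "2 * p \<le> 1"
      using sol x by (auto simp: pm_solution_def algebra_simps power2_eq_square)
    then show False using \<open>x \<noteq> (0, 1)\<close> x \<open>m = 1\<close> by simp
  qed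
  then show "\<exists>y. (case y of (p, m) \<Rightarrow> pm_solution p m) \<and> pm_step y = x \<and>
      (case y of (p, m) \<Rightarrow> nat m) < (case x of (p, m) \<Rightarrow> nat m)"
    using pm_solution_descent[of p m] sol x
    by (intro exI[of _ "(5 * p + 1 - m, 6 * p + 1 - m)"]) (auto simp: pm_step_def pm_solution_def)
qed

definition qn_step :: "int \<times> int \<Rightarrow> int \<times> int" where
  "qn_step = (\<lambda>(q, n). (8 * n - 5 * q + 1, 19 * n - 12 * q + 3))"

definition qn_solution :: "int \<Rightarrow> int \<Rightarrow> bool" where
  "qn_solution q n \<longleftrightarrow> 0 \<le> q \<and> 0 < n \<and> 3 * q^2 - 6 * n * q + 2 * n^2 - n = 0 \<and> q \<le> n"

lemma qn_seq_Suc_eq_funpow: "qn_seq (Suc i) = (qn_step ^^ i) (1, 3)"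
  by (induction i) (simp_all add: qn_step_def case_prod_beta Let_def)

lemma qn_equation_rat_iff:
  "(of_int q :: rat)^2 - 2 * of_int n * of_int q + of_int n * (2 * of_int n - 1) / 3 = 0
   \<longleftrightarrow> 3 * q^2 - 6 * n * q + 2 * n^2 - n = 0"
proof -
  have "(of_int q :: rat)^2 - 2 * of_int n * of_int q + of_int n * (2 * of_int n - 1) / 3
      = of_int (3 * q^2 - 6 * n * q + 2 * n^2 - n) / 3"
    by (simp add: field_simps power2_eq_square)
  then show ?thesis by (simp only: divide_eq_0_iff of_int_eq_0_iff) simp
qed

lemma qn_solution_step:
  assumes "qn_solution q n"
  shows "qn_solution (8 * n - 5 * q + 1) (19 * n - 12 * q + 3)"
proof -
  have "3 * (8 * n - 5 * q + 1)^2 - 6 * (19 * n - 12 * q + 3) * (8 * n - 5 * q + 1)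
          + 2 * (19 * n - 12 * q + 3)^2 - (19 * n - 12 * q + 3)
      = 3 * q^2 - 6 * n * q + 2 * n^2 - n"
    by (simp add: algebra_simps power2_eq_square)
  then show ?thesis using assms by (simp add: qn_solution_def)
qed

lemma qn_solution_descent:
  assumes sol: "qn_solution q n" and "n > 3"
  shows "qn_solution (19 * q - 8 * n + 5) (12 * q - 5 * n + 3) \<and> 12 * q - 5 * n + 3 < n"
proof -
  define q' where "q' = 19 * q - 8 * n + 5"
  define n' where "n' = 12 * q - 5 * n + 3"
  have eq: "3 * q^2 - 6 * n * q + 2 * n^2 - n = 0" and "0 \<le> q" "q \<le> n"
    using sol by (auto simp: qn_solution_def)
  \<comment> \<open>Each bound: \<open>c \<cdot> (3 q\<^sup>2 - 6 n q + 2 n\<^sup>2 - n)\<close> is a quadratic in \<open>n\<close> plus three times a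
    product of two linear factors, which has a fixed sign if the bound fails.\<close>
  have "n' > 0"
  proof (rule ccontr)
    assume "\<not> n' > 0"
    then have "0 \<le> n' * (12 * q - 19 * n - 3)"
      using \<open>q \<le> n\<close> \<open>n > 3\<close> by (intro mult_nonpos_nonpos) auto
    moreover have "3 * (n - 3)^2 + 3 * (n' * (12 * q - 19 * n - 3))
        = 144 * (3 * q^2 - 6 * n * q + 2 * n^2 - n)"
      by (simp add: n'_def algebra_simps power2_eq_square)
    moreover have "(n - 3)^2 > 0" using \<open>n > 3\<close> by simp
    ultimately show False using eq by (smt (verit))
  qed
  have "4 * q < 2 * n - 1"
  proof (rule ccontr)
    assume "\<not> 4 * q < 2 * n - 1"
    then have "(4 * q - 2 * n + 1) * (4 * q - 6 * n - 1) \<le> 0"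
      using \<open>q \<le> n\<close> \<open>n > 3\<close> by (intro mult_nonneg_nonpos) auto
    moreover have "3 - 4 * n^2 - 4 * n + 3 * ((4 * q - 2 * n + 1) * (4 * q - 6 * n - 1))
        = 16 * (3 * q^2 - 6 * n * q + 2 * n^2 - n)"
      by (simp add: algebra_simps power2_eq_square)
    moreover have "n^2 \<ge> 0" by simp
    ultimately show False using eq \<open>n > 3\<close> by (smt (verit))
  qed
  have "7 * q \<le> 3 * n - 2"
  proof (rule ccontr)
    assume "\<not> 7 * q \<le> 3 * n - 2"
    then have "(7 * q - 3 * n + 2) * (7 * q - 11 * n - 2) \<le> 0"
      using \<open>q \<le> n\<close> \<open>n > 3\<close> by (intro mult_nonneg_nonpos) auto
    moreover have "12 - n^2 - n + 3 * ((7 * q - 3 * n + 2) * (7 * q - 11 * n - 2))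
        = 49 * (3 * q^2 - 6 * n * q + 2 * n^2 - n)"
      by (simp add: algebra_simps power2_eq_square)
    moreover have "n^2 \<ge> 4 * n" using \<open>n > 3\<close> by (simp add: power2_eq_square)
    ultimately show False using eq \<open>n > 3\<close> by (smt (verit))
  qed
  have eq': "3 * q'^2 - 6 * n' * q' + 2 * n'^2 - n' = 0"
    using eq unfolding q'_def n'_def by (simp add: algebra_simps power2_eq_square)
  have "q' \<ge> 0"
  proof (rule ccontr)
    assume "\<not> q' \<ge> 0"
    then have "3 * q' * (2 * n' - q') < 0" using \<open>n' > 0\<close> by (simp add: mult_less_0_iff)
    moreover have "3 * q' * (2 * n' - q') = n' * (2 * n' - 1)"
      using eq' by (simp add: algebra_simps power2_eq_square)
    ultimately show False using \<open>n' > 0\<close> by (simp add: mult_less_0_iff)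
  qed
  show ?thesis
    using eq' \<open>q' \<ge> 0\<close> \<open>n' > 0\<close> \<open>4 * q < 2 * n - 1\<close> \<open>7 * q \<le> 3 * n - 2\<close>
    unfolding qn_solution_def q'_def n'_def by simp
qed

lemma qn_solutions_eq_orbit:
  "{(q, n). qn_solution q n} = range (\<lambda>i. (qn_step ^^ i) (1, 3))"
proof (rule Collect_eq_orbit_by_descent[where \<mu> = "\<lambda>(q, n). nat n"])
  show "case (1, 3) of (q, n) \<Rightarrow> qn_solution q n" by (simp add: qn_solution_def)
next
  fix x :: "int \<times> int"
  assume "case x of (q, n) \<Rightarrow> qn_solution q n"
  then show "case qn_step x of (q, n) \<Rightarrow> qn_solution q n"
    by (cases x) (simp add: qn_step_def qn_solution_step)
next
  fix x :: "int \<times> int"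
  assume sol: "case x of (q, n) \<Rightarrow> qn_solution q n" and "x \<noteq> (1, 3)"
  obtain q n where x: "x = (q, n)" by fastforce
  have "n > 3"
  proof (rule ccontr)
    assume "\<not> n > 3"
    then have "n \<in> {1, 2, 3}" and "q \<in> {0, 1, 2, 3}" using sol x by (auto simp: qn_solution_def)
    then show False
      using sol x \<open>x \<noteq> (1, 3)\<close> by (auto simp: qn_solution_def power2_eq_square)
  qed
  then show "\<exists>y. (case y of (q, n) \<Rightarrow> qn_solution q n) \<and> qn_step y = x \<and>
      (case y of (q, n) \<Rightarrow> nat n) < (case x of (q, n) \<Rightarrow> nat n)"
    using qn_solution_descent[of q n] sol x
    by (intro exI[of _ "(19 * q - 8 * n + 5, 12 * q - 5 * n + 3)"])
      (auto simp: qn_step_def qn_solution_def)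
qed

lemma range_Suc_eq_Collect_ge_1: "range (\<lambda>i. f (Suc i)) = {f i | i. i \<ge> 1}"
  by (auto dest: Suc_le_D)

theorem lemma3p5:
  shows "({(p::int, m::int). 0 \<le> p \<and> 0 < m \<and>
            (of_int p :: rat)^2 - of_int m * of_int p + of_int m * (of_int m - 1) / 6 = 0 \<and>
            p \<le> m div 2}
         = {pm_seq i | i. i \<ge> 1}) \<and>
         ({(q::int, n::int). 0 \<le> q \<and> 0 < n \<and>
            (of_int q :: rat)^2 - 2 * of_int n * of_int q + of_int n * (2 * of_int n - 1) / 3 = 0 \<and>
            q \<le> n}
         = {qn_seq i | i. i \<ge> 1})"
proof -
  have "p \<le> m div 2 \<longleftrightarrow> 2 * p \<le> m" for p m :: int by presburger
  then show ?thesis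
    using pm_solutions_eq_orbit qn_solutions_eq_orbit
    unfolding pm_solution_def qn_solution_def pm_equation_rat_iff qn_equation_rat_iff
      pm_seq_Suc_eq_funpow[symmetric] qn_seq_Suc_eq_funpow[symmetric] range_Suc_eq_Collect_ge_1
    by simp
qed

end
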